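(* Let $p$ and $q$ be distinct primes. Let $G$ be a direct product of a normal cyclic Sylow $p$-subgroup $P$ and a minimal non-abelian $q$-subgroup $Q$. Then $G$ is exponent-critical.
   Context: A finite group $G$ is exponent-critical if $\exp(G)$ is not the least common multiple of the exponents of the proper non-abelian subgroups of $G$. A minimal non-abelian group is a non-abelian group all of whose proper subgroups are abelian. *)

theory Defs
  imports "HOL-Algebra.Algebra"
begin

definition group_exponent :: "('a, 'b) monoid_scheme \<Rightarrow> 'a set \<Rightarrow> nat" where
  "group_exponent G H = (LEAST n. 0 < n \<and> (\<forall>x\<in>H. x [^]\<^bsub>G\<^esub> n = \<one>\<^bsub>G\<^esub>))"

definition exponent_critical :: "('a, 'b) monoid_scheme \<Rightarrow> bool" where
  "exponent_critical G \<longleftrightarrow>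
     group_exponent G (carrier G) \<noteq>
     Lcm {group_exponent G H | H. subgroup H G \<and> H \<noteq> carrier G \<and> \<not> comm_group (G\<lparr>carrier := H\<rparr>)}"

definition minimal_nonabelian :: "('a, 'b) monoid_scheme \<Rightarrow> bool" where
  "minimal_nonabelian G \<longleftrightarrow> \<not> comm_group G \<and>
     (\<forall>H. subgroup H G \<and> H \<noteq> carrier G \<longrightarrow> comm_group (G\<lparr>carrier := H\<rparr>))"

end

theory Submission
  imports Defs
begin

(* Write G = P Q with P cyclic of order p^a, Q minimal non-abelian of order q^k, and the
   elements of P commuting with those of Q. As the orders are coprime, every subgroup H
   splits as (P \<inter> H)(Q \<inter> H). If H is non-abelian then so is Q \<inter> H, hence Q \<subseteq> H by
   minimality; if H is moreover proper, P \<inter> H is a proper subgroup of the cyclic p-group P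
   and has exponent dividing p^(a-1). So the lcm of the exponents of the proper non-abelian
   subgroups divides p^(a-1) q^k, while a generator of P has order p^a. For a = 0 there are
   no proper non-abelian subgroups, the lcm is 1, and exp G > 1 because Q is non-abelian. *)

lemma (in group) group_exponent_dvd_iff:
  assumes "finite (carrier G)" "H \<subseteq> carrier G"
  shows "group_exponent G H dvd n \<longleftrightarrow> (\<forall>x\<in>H. x [^] n = \<one>)"
proof -
  let ?e = "group_exponent G H"
  have "0 < order G \<and> (\<forall>x\<in>H. x [^] order G = \<one>)"
    using assms pow_order_eq_1 order_gt_0_iff_finite by blast
  then have "0 < ?e \<and> (\<forall>x\<in>H. x [^] ?e = \<one>)"
    unfolding group_exponent_def by (rule LeastI)
  then have e: "0 < ?e" "\<forall>x\<in>H. x [^] ?e = \<one>"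
    by auto
  have ord_dvd_e: "ord x dvd ?e" if "x \<in> H" for x
    using e(2) that assms(2) pow_eq_id by blast
  show ?thesis
  proof
    assume "?e dvd n"
    then show "\<forall>x\<in>H. x [^] n = \<one>"
      using ord_dvd_e assms(2) pow_eq_id dvd_trans by blast
  next
    assume n: "\<forall>x\<in>H. x [^] n = \<one>"
    show "?e dvd n"
    proof (rule ccontr)
      assume "\<not> ?e dvd n"
      then have "0 < n mod ?e"
        by (simp add: dvd_eq_mod_eq_0)
      moreover have "\<forall>x\<in>H. x [^] (n mod ?e) = \<one>"
        using n ord_dvd_e assms(2) pow_eq_id by (metis dvd_mod subsetD)
      ultimately have "?e \<le> n mod ?e"
        unfolding group_exponent_def by (auto intro: Least_le)
      then show False
        using mod_less_divisor[OF e(1), of n] by linarith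
    qed
  qed
qed

lemma (in group) ord_dvd_group_exponent:
  assumes "finite (carrier G)" "H \<subseteq> carrier G" "x \<in> H"
  shows "ord x dvd group_exponent G H"
proof -
  have "x [^] group_exponent G H = \<one>"
    using group_exponent_dvd_iff[OF assms(1,2), THEN iffD1, OF dvd_refl] assms(3) by blast
  then show ?thesis
    using assms(2,3) pow_eq_id by blast
qed

lemma (in group) group_exponent_eq_1_imp_trivial:
  assumes "finite (carrier G)" "H \<subseteq> carrier G" "group_exponent G H = 1"
  shows "H \<subseteq> {\<one>}"
proof
  fix x
  assume x: "x \<in> H"
  then have "x [^] (1::nat) = \<one>"
    using assms group_exponent_dvd_iff[OF assms(1,2), of 1] by simp
  then show "x \<in> {\<one>}"
    using x assms(2) by auto
qed

lemma (in group) pow_card_subgroup_eq_one: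
  assumes "subgroup H G" "finite H" "x \<in> H"
  shows "x [^] card H = \<one>"
proof -
  interpret H: group "G\<lparr>carrier := H\<rparr>"
    using subgroup.subgroup_is_group[OF assms(1)] by simp
  have "x [^]\<^bsub>G\<lparr>carrier := H\<rparr>\<^esub> order (G\<lparr>carrier := H\<rparr>) = \<one>"
    using H.pow_order_eq_1 assms(3) by simp
  then show ?thesis
    using nat_pow_consistent assms(3) by (simp add: order_def)
qed

lemma (in group) normal_Int_trivial_imp_commute:
  assumes P: "P \<lhd> G" and Q: "Q \<lhd> G" and "P \<inter> Q = {\<one>}" "u \<in> P" "v \<in> Q"
  shows "u \<otimes> v = v \<otimes> u"
proof -
  have subP: "subgroup P G" and subQ: "subgroup Q G"
    using P Q normal_imp_subgroup by auto
  have u: "u \<in> carrier G" and v: "v \<in> carrier G"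
    using subgroup.mem_carrier[OF subP \<open>u \<in> P\<close>] subgroup.mem_carrier[OF subQ \<open>v \<in> Q\<close>] .
  have "v \<otimes> inv u \<otimes> inv v \<in> P"
    using normal.inv_op_closed2[OF P v subgroup.m_inv_closed[OF subP \<open>u \<in> P\<close>]] .
  then have "u \<otimes> (v \<otimes> inv u \<otimes> inv v) \<in> P"
    using subgroup.m_closed[OF subP \<open>u \<in> P\<close>] by blast
  moreover have "u \<otimes> v \<otimes> inv u \<otimes> inv v \<in> Q"
    using normal.inv_op_closed2[OF Q u \<open>v \<in> Q\<close>] subgroup.m_inv_closed[OF subQ \<open>v \<in> Q\<close>]
      subgroup.m_closed[OF subQ] by blast
  moreover have "u \<otimes> v \<otimes> inv u \<otimes> inv v = u \<otimes> (v \<otimes> inv u \<otimes> inv v)"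
    using u v by (simp add: m_assoc)
  ultimately have "u \<otimes> v \<otimes> inv u \<otimes> inv v = \<one>"
    using assms(3) by auto
  then have "u \<otimes> v \<otimes> inv u \<otimes> inv v \<otimes> v \<otimes> u = v \<otimes> u"
    using u v by simp
  then show ?thesis
    using u v by (simp add: m_assoc)
qed

lemma (in group) mem_subgroup_if_coprime_pow_mem:
  fixes m n :: nat
  assumes "subgroup H G" "x \<in> carrier G" "x [^] m = \<one>" "coprime n m" "x [^] n \<in> H"
  shows "x \<in> H"
proof -
  obtain s t :: int where st: "int n * s + int m * t = 1"
    using bezout_int[of "int n" "int m"] assms(4) by (auto simp: ac_simps)
  have "(x [^] n) [^] s = (x [^] int n) [^] s \<otimes> (x [^] int m) [^] t"
    using assms(2,3) by (simp add: int_pow_int)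
  also have "\<dots> = x [^] (int n * s + int m * t)"
    using assms(2) by (simp add: int_pow_pow int_pow_mult)
  also have "\<dots> = x"
    using assms(2) st by simp
  finally show ?thesis
    using subgroup_int_pow_closed[OF assms(1,5), of s] by simp
qed

lemma comm_group_carrier_update_m_comm:
  fixes G (structure)
  assumes "comm_group (G\<lparr>carrier := H\<rparr>)" "x \<in> H" "y \<in> H"
  shows "x \<otimes> y = y \<otimes> x"
  using comm_monoid.m_comm[OF comm_group.axioms(1)[OF assms(1)]] assms(2,3) by simp

lemma (in group) comm_group_if_products_of_commuting:
  assumes "subgroup H G" "A \<subseteq> carrier G" "B \<subseteq> carrier G"
    and comm_A: "\<And>a a'. a \<in> A \<Longrightarrow> a' \<in> A \<Longrightarrow> a \<otimes> a' = a' \<otimes> a"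
    and comm_B: "\<And>b b'. b \<in> B \<Longrightarrow> b' \<in> B \<Longrightarrow> b \<otimes> b' = b' \<otimes> b"
    and comm_AB: "\<And>a b. a \<in> A \<Longrightarrow> b \<in> B \<Longrightarrow> a \<otimes> b = b \<otimes> a"
    and products: "\<And>x. x \<in> H \<Longrightarrow> \<exists>a\<in>A. \<exists>b\<in>B. x = a \<otimes> b"
  shows "comm_group (G\<lparr>carrier := H\<rparr>)"
proof (rule group.group_comm_groupI)
  show "group (G\<lparr>carrier := H\<rparr>)"
    using subgroup.subgroup_is_group[OF assms(1) is_group] .
next
  fix x y
  assume "x \<in> carrier (G\<lparr>carrier := H\<rparr>)" "y \<in> carrier (G\<lparr>carrier := H\<rparr>)"
  then obtain a b a' b' where ab: "a \<in> A" "b \<in> B" "x = a \<otimes> b"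
    and ab': "a' \<in> A" "b' \<in> B" "y = a' \<otimes> b'"
    using products[of x] products[of y] by auto
  have carrier: "a \<in> carrier G" "b \<in> carrier G" "a' \<in> carrier G" "b' \<in> carrier G"
    using ab ab' assms(2,3) by auto
  have "x \<otimes> y = a \<otimes> (b \<otimes> a') \<otimes> b'"
    using ab ab' carrier by (simp add: m_assoc)
  also have "\<dots> = a \<otimes> (a' \<otimes> b) \<otimes> b'"
    using comm_AB[OF ab'(1) ab(2)] by simp
  also have "\<dots> = (a \<otimes> a') \<otimes> (b \<otimes> b')"
    using carrier by (simp add: m_assoc)
  also have "\<dots> = (a' \<otimes> a) \<otimes> (b' \<otimes> b)"
    using comm_A[OF ab(1) ab'(1)] comm_B[OF ab(2) ab'(2)] by simp
  also have "\<dots> = a' \<otimes> (a \<otimes> b') \<otimes> b"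
    using carrier by (simp add: m_assoc)
  also have "\<dots> = a' \<otimes> (b' \<otimes> a) \<otimes> b"
    using comm_AB[OF ab(1) ab'(2)] by simp
  also have "\<dots> = y \<otimes> x"
    using ab ab' carrier by (simp add: m_assoc)
  finally show "x \<otimes>\<^bsub>G\<lparr>carrier := H\<rparr>\<^esub> y = y \<otimes>\<^bsub>G\<lparr>carrier := H\<rparr>\<^esub> x"
    by simp
qed

lemma (in group) subgroup_decompose_coprime_product:
  fixes m n :: nat
  assumes "subgroup P G" "subgroup Q G" "P <#> Q = carrier G"
    and commute: "\<And>u v. u \<in> P \<Longrightarrow> v \<in> Q \<Longrightarrow> u \<otimes> v = v \<otimes> u"
    and exp_P: "\<And>u. u \<in> P \<Longrightarrow> u [^] m = \<one>"
    and exp_Q: "\<And>v. v \<in> Q \<Longrightarrow> v [^] n = \<one>"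
    and "coprime m n" "subgroup H G" "x \<in> H"
  obtains u v where "u \<in> P \<inter> H" "v \<in> Q \<inter> H" "x = u \<otimes> v"
proof -
  have "x \<in> P <#> Q"
    using subgroup.mem_carrier[OF assms(8,9)] assms(3) by simp
  then obtain u v where uv: "u \<in> P" "v \<in> Q" "x = u \<otimes> v"
    unfolding set_mult_def by blast
  have u: "u \<in> carrier G" and v: "v \<in> carrier G"
    using subgroup.mem_carrier[OF assms(1) uv(1)] subgroup.mem_carrier[OF assms(2) uv(2)] .
  have "x [^] m = v [^] m"
    using uv u v exp_P pow_mult_distrib[OF commute] by simp
  then have "v [^] m \<in> H"
    using subgroup_int_pow_closed[OF assms(8,9), of "int m"] by (simp add: int_pow_int)
  then have "v \<in> H"
    using mem_subgroup_if_coprime_pow_mem[OF assms(8) v exp_Q[OF uv(2)] assms(7)] by blast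
  moreover have "u = x \<otimes> inv v"
    using uv u v by (simp add: m_assoc)
  then have "u \<in> H"
    using subgroup.m_closed[OF assms(8,9) subgroup.m_inv_closed[OF assms(8) \<open>v \<in> H\<close>]] by simp
  ultimately show ?thesis
    using that uv by blast
qed

lemma (in group) ord_dvd_prime_power_pred_if_not_generating:
  assumes "subgroup P G" "Factorial_Ring.prime p" "card P = p ^ a" "u \<in> P" "generate G {u} \<noteq> P"
  shows "ord u dvd p ^ (a - 1)"
proof -
  have "finite P"
    using assms(2,3) card_ge_0_finite prime_gt_0_nat by (metis zero_less_power)
  have u: "u \<in> carrier G"
    using subgroup.mem_carrier[OF assms(1,4)] .
  have "ord u dvd p ^ a"
    using pow_card_subgroup_eq_one[OF assms(1) \<open>finite P\<close> assms(4)] assms(3) pow_eq_id[OF u] by simp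
  then obtain j where j: "j \<le> a" "ord u = p ^ j"
    using divides_primepow_nat[OF assms(2)] by blast
  have "j \<noteq> a"
  proof
    assume "j = a"
    then have "card (generate G {u}) = card P"
      using generate_pow_card[OF u] j assms(3) by simp
    moreover have "generate G {u} \<subseteq> P"
      using generate_subgroup_incl[OF _ assms(1)] assms(4) by blast
    ultimately show False
      using card_subset_eq[OF \<open>finite P\<close>] assms(5) by blast
  qed
  then show ?thesis
    using j by (simp add: le_imp_power_dvd)
qed

lemma (in group) cyclic_subgroup_ord_eq_cardE:
  assumes "subgroup P G" "cyclic_group (G\<lparr>carrier := P\<rparr>)"
  obtains g where "g \<in> P" "ord g = card P"
proof -
  obtain g where g: "g \<in> P" "subgroup_generated (G\<lparr>carrier := P\<rparr>) {g} = G\<lparr>carrier := P\<rparr>"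
    using assms(2) unfolding cyclic_group_def by auto
  then have "carrier (subgroup_generated (G\<lparr>carrier := P\<rparr>) {g}) = P"
    by simp
  then have "generate (G\<lparr>carrier := P\<rparr>) {g} = P"
    using g(1) by (simp add: carrier_subgroup_generated)
  then have "generate G {g} = P"
    using generate_consistent[of "{g}" P] assms(1) g(1) by simp
  then have "ord g = card P"
    using generate_pow_card[OF subgroup.mem_carrier[OF assms(1) g(1)]] by simp
  with g(1) show ?thesis
    using that by blast
qed

locale cyclic_times_minimal_nonabelian = group G for G (structure) +
  fixes P Q :: "'a set" and p q a k :: nat
  assumes finite_carrier: "finite (carrier G)"
    and prime_p: "Factorial_Ring.prime p" and prime_q: "Factorial_Ring.prime q"
    and distinct_primes: "p \<noteq> q"
    and subgroup_P: "subgroup P G" and card_P: "card P = p ^ a"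
    and cyclic_P: "cyclic_group (G\<lparr>carrier := P\<rparr>)"
    and subgroup_Q: "subgroup Q G" and card_Q: "card Q = q ^ k"
    and minimal_nonabelian_Q: "minimal_nonabelian (G\<lparr>carrier := Q\<rparr>)"
    and commute: "\<And>u v. u \<in> P \<Longrightarrow> v \<in> Q \<Longrightarrow> u \<otimes> v = v \<otimes> u"
    and product: "P <#> Q = carrier G"
begin

lemma pow_card_P: "u \<in> P \<Longrightarrow> u [^] (p ^ a) = \<one>"
  using pow_card_subgroup_eq_one[OF subgroup_P] card_P finite_carrier subgroup.subset[OF subgroup_P]
  by (metis finite_subset)

lemma pow_card_Q: "v \<in> Q \<Longrightarrow> v [^] (q ^ k) = \<one>"
  using pow_card_subgroup_eq_one[OF subgroup_Q] card_Q finite_carrier subgroup.subset[OF subgroup_Q]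
  by (metis finite_subset)

lemma coprime_cards: "coprime (p ^ a) (q ^ k)"
  using primes_coprime[OF prime_p prime_q distinct_primes] by simp

lemma subgroup_decompose:
  assumes "subgroup H G" "x \<in> H"
  obtains u v where "u \<in> P \<inter> H" "v \<in> Q \<inter> H" "x = u \<otimes> v"
  using subgroup_decompose_coprime_product[OF subgroup_P subgroup_Q product commute pow_card_P
      pow_card_Q coprime_cards assms] by blast

lemma P_m_comm: "u \<in> P \<Longrightarrow> u' \<in> P \<Longrightarrow> u \<otimes> u' = u' \<otimes> u"
  using group.cyclic_imp_abelian_group[OF subgroup.subgroup_is_group[OF subgroup_P is_group] cyclic_P]
  by (rule comm_group_carrier_update_m_comm)

lemma Q_subset_if_nonabelian:
  assumes H: "subgroup H G" and nonabelian: "\<not> comm_group (G\<lparr>carrier := H\<rparr>)"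
  shows "Q \<subseteq> H"
proof (rule ccontr)
  assume "\<not> Q \<subseteq> H"
  then have "Q \<inter> H \<noteq> Q"
    by blast
  moreover have "subgroup (Q \<inter> H) (G\<lparr>carrier := Q\<rparr>)"
    using subgroup_incl[OF subgroups_Inter_pair[OF subgroup_Q H] subgroup_Q] by blast
  ultimately have comm_group_QH: "comm_group (G\<lparr>carrier := Q \<inter> H\<rparr>)"
    using minimal_nonabelian_Q unfolding minimal_nonabelian_def by auto
  have comm_QH: "v \<otimes> v' = v' \<otimes> v" if "v \<in> Q \<inter> H" "v' \<in> Q \<inter> H" for v v'
    using comm_group_carrier_update_m_comm[OF comm_group_QH that] .
  have "Q \<inter> H \<subseteq> carrier G"
    using subgroup.subset[OF subgroup_Q] by blast
  moreover have "u \<otimes> v = v \<otimes> u" if "u \<in> P" "v \<in> Q \<inter> H" for u v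
    using commute that by blast
  moreover have "\<exists>u\<in>P. \<exists>v\<in>Q \<inter> H. x = u \<otimes> v" if "x \<in> H" for x
    using subgroup_decompose[OF H that] by blast
  ultimately have "comm_group (G\<lparr>carrier := H\<rparr>)"
    using comm_group_if_products_of_commuting[OF H subgroup.subset[OF subgroup_P] _ P_m_comm comm_QH]
    by blast
  with nonabelian show False
    by contradiction
qed

lemma P_not_subset_if_nonabelian_proper:
  assumes H: "subgroup H G" and proper: "H \<noteq> carrier G"
    and nonabelian: "\<not> comm_group (G\<lparr>carrier := H\<rparr>)"
  shows "\<not> P \<subseteq> H"
proof
  assume "P \<subseteq> H"
  then have "carrier G \<subseteq> H <#> H"
    using product mono_set_mult Q_subset_if_nonabelian[OF H nonabelian] by metis
  then show False
    using subgroup_mult_id[OF H] subgroup.subset[OF H] proper by blast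
qed

lemma group_exponent_dvd_if_nonabelian_proper:
  assumes H: "subgroup H G" and proper: "H \<noteq> carrier G"
    and nonabelian: "\<not> comm_group (G\<lparr>carrier := H\<rparr>)"
  shows "group_exponent G H dvd p ^ (a - 1) * q ^ k"
proof -
  have "x [^] (p ^ (a - 1) * q ^ k) = \<one>" if x: "x \<in> H" for x
  proof -
    obtain u v where u: "u \<in> P \<inter> H" and v: "v \<in> Q \<inter> H" and x_eq: "x = u \<otimes> v"
      using subgroup_decompose[OF H x] by blast
    have u_carrier: "u \<in> carrier G" and v_carrier: "v \<in> carrier G"
      using u v subgroup.subset[OF subgroup_P] subgroup.subset[OF subgroup_Q] by auto
    have "generate G {u} \<subseteq> H"
      using generate_subgroup_incl[OF _ H] u by blast
    then have "generate G {u} \<noteq> P"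
      using P_not_subset_if_nonabelian_proper[OF H proper nonabelian] by blast
    then have "ord u dvd p ^ (a - 1)"
      using ord_dvd_prime_power_pred_if_not_generating[OF subgroup_P prime_p card_P] u by blast
    then have "u [^] (p ^ (a - 1) * q ^ k) = \<one>"
      using pow_eq_id[OF u_carrier] by simp
    moreover have "v [^] (p ^ (a - 1) * q ^ k) = \<one>"
      using pow_card_Q v v_carrier by (simp add: mult.commute nat_pow_pow[symmetric])
    ultimately show ?thesis
      using x_eq pow_mult_distrib[OF commute] u v u_carrier v_carrier by simp
  qed
  then show ?thesis
    using group_exponent_dvd_iff[OF finite_carrier subgroup.subset[OF H]] by blast
qed

lemma prime_power_dvd_group_exponent: "p ^ a dvd group_exponent G (carrier G)"
proof -
  obtain g where "g \<in> P" "ord g = card P"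
    using cyclic_subgroup_ord_eq_cardE[OF subgroup_P cyclic_P] .
  then show ?thesis
    using ord_dvd_group_exponent[OF finite_carrier] subgroup.subset[OF subgroup_P] card_P
    by (metis subsetD order_refl)
qed

lemma group_exponent_ne_1: "group_exponent G (carrier G) \<noteq> 1"
proof
  assume "group_exponent G (carrier G) = 1"
  then have "Q \<subseteq> {\<one>}"
    using group_exponent_eq_1_imp_trivial[OF finite_carrier] subgroup.subset[OF subgroup_Q] by blast
  then have "comm_group (G\<lparr>carrier := Q\<rparr>)"
    using group.group_comm_groupI[OF subgroup.subgroup_is_group[OF subgroup_Q is_group]] by auto
  then show False
    using minimal_nonabelian_Q unfolding minimal_nonabelian_def by blast
qed

theorem exponent_critical: "exponent_critical G"
proof -
  define S where "S = {group_exponent G H | H. subgroup H G \<and> H \<noteq> carrier G \<and>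
    \<not> comm_group (G\<lparr>carrier := H\<rparr>)}"
  have "group_exponent G (carrier G) \<noteq> Lcm S"
  proof (cases "a = 0")
    case True
    then have "P \<subseteq> H" if "subgroup H G" for H
      using card_P subgroup.one_closed[OF subgroup_P] subgroup.one_closed[OF that]
      by (metis card_1_singletonE power_0 singletonD subsetI)
    then have "S = {}"
      unfolding S_def using P_not_subset_if_nonabelian_proper by blast
    then show ?thesis
      using group_exponent_ne_1 by simp
  next
    case False
    have "Lcm S dvd p ^ (a - 1) * q ^ k"
      unfolding S_def using group_exponent_dvd_if_nonabelian_proper by (auto intro: Lcm_least)
    moreover have "\<not> p ^ a dvd p ^ (a - 1) * q ^ k"
    proof
      assume "p ^ a dvd p ^ (a - 1) * q ^ k"
      then have "p ^ a dvd p ^ (a - 1)"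
        using coprime_cards coprime_dvd_mult_left_iff by blast
      then show False
        using False power_dvd_imp_le prime_gt_1_nat[OF prime_p] by fastforce
    qed
    ultimately show ?thesis
      using prime_power_dvd_group_exponent dvd_trans by metis
  qed
  then show ?thesis
    unfolding exponent_critical_def S_def .
qed

end

theorem mainTheorem7:
  fixes G :: "('a, 'b) monoid_scheme" and P Q :: "'a set" and p q :: nat
  assumes "group G" and "finite (carrier G)"
    and "Factorial_Ring.prime p" and "Factorial_Ring.prime q" and "p \<noteq> q"
    and "P \<lhd> G" and "card P = p ^ multiplicity p (order G)"
    and "cyclic_group (G\<lparr>carrier := P\<rparr>)"
    and "Q \<lhd> G" and "\<exists>k. card Q = q ^ k"
    and "minimal_nonabelian (G\<lparr>carrier := Q\<rparr>)"
    and "P \<inter> Q = {\<one>\<^bsub>G\<^esub>}" and "P <#>\<^bsub>G\<^esub> Q = carrier G"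
  shows "exponent_critical G"
proof -
  interpret group G by fact
  obtain k where "card Q = q ^ k"
    using assms(10) ..
  have "u \<otimes>\<^bsub>G\<^esub> v = v \<otimes>\<^bsub>G\<^esub> u" if "u \<in> P" "v \<in> Q" for u v
    using normal_Int_trivial_imp_commute assms(6,9,12) that by blast
  then interpret cyclic_times_minimal_nonabelian G P Q p q "multiplicity p (order G)" k
    using assms \<open>card Q = q ^ k\<close> normal_imp_subgroup is_group
    unfolding cyclic_times_minimal_nonabelian_def cyclic_times_minimal_nonabelian_axioms_def
    by blast
  show ?thesis
    by (rule exponent_critical)
qed

end
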